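(* Let $d,\tilde d\in\mathbb{R}^m$ with $d,\tilde d>0$ and $\ell,\tilde\ell\in\mathbb{R}^m$ with $f(d,\ell)>0$ and $f(\tilde d,\tilde\ell)>0$. Let $j\in\{1,\dots,m\}$ and suppose $$\frac{1}{f(\tilde d,\tilde\ell)}\tilde d=\alpha\Big(\frac{1}{f(d,\ell)}d+\frac{2}{m-1}\frac{1}{\gamma_j(d,\ell)^2}e_j\Big)$$ for some scalar $\alpha\ge\frac{m^2-1}{m^2}$. If $\big(d_j/f(d,\ell)\big)^{-1/2}\ge\tau(A,u)$, then $\phi(\tilde d,\tilde\ell)\le e^{-\frac{1}{2(m+1)}}\phi(d,\ell)$.
   Context: Standing assumption: $A=[a_1|\cdots|a_m]\in\mathbb{R}^{n\times m}$ has columns of unit Euclidean norm and $\{A\lambda:\lambda\ge0\}=\mathbb{R}^n$ (so $m\ge2$); $u\in\mathbb{R}^m$. $D=\mathrm{diag}(d)$; $r(\ell)=\tfrac12(u+\ell)$, $v(\ell)=\tfrac12(u-\ell)$, $B(d)=ADA^\top$, $y(d,\ell)=B(d)^{-1}ADr(\ell)$, $t(d,\ell)=A^\top y(d,\ell)-r(\ell)$, $f(d,\ell)=v(\ell)^\top Dv(\ell)-t(d,\ell)^\top Dt(d,\ell)$, $\gamma_i(d,\ell)=\sqrt{f(d,\ell)a_i^\top B(d)^{-1}a_i}$. $\tau(A,u):=|z^*|$ with $z^*:=\max_x\min_i(u_i-a_i^\top x)$. Potential: $\phi(d,\ell):=\prod_{i=1}^m\max\Big\{\big(\tfrac{d_i}{f(d,\ell)}\big)^{-1/2},\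 \tfrac{m}{m+1}\tau(A,u)\Big\}$. *)

theory Defs
  imports "HOL-Analysis.Analysis"
begin

text \<open>A :: real^'m^'n is the n x m matrix whose columns a_i = column i A.
  Vectors d, l, u :: real^'m; m = CARD('m).\<close>

definition diagv :: "real^'m \<Rightarrow> real^'m^'m" where
  "diagv d = (\<chi> i j. if i = j then d $ i else 0)"

definition rvec :: "real^'m \<Rightarrow> real^'m \<Rightarrow> real^'m" where
  "rvec u l = (1/2) *\<^sub>R (u + l)"

definition vvec :: "real^'m \<Rightarrow> real^'m \<Rightarrow> real^'m" where
  "vvec u l = (1/2) *\<^sub>R (u - l)"

definition Bmat :: "real^'m^'n \<Rightarrow> real^'m \<Rightarrow> real^'n^'n" where
  "Bmat A d = A ** diagv d ** transpose A"

definition yvec :: "real^'m^'n \<Rightarrow> real^'m \<Rightarrow> real^'m \<Rightarrow> real^'m \<Rightarrow> real^'n" where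
  "yvec A u d l = matrix_inv (Bmat A d) *v (A *v (diagv d *v rvec u l))"

definition tvec :: "real^'m^'n \<Rightarrow> real^'m \<Rightarrow> real^'m \<Rightarrow> real^'m \<Rightarrow> real^'m" where
  "tvec A u d l = transpose A *v yvec A u d l - rvec u l"

definition ffun :: "real^'m^'n \<Rightarrow> real^'m \<Rightarrow> real^'m \<Rightarrow> real^'m \<Rightarrow> real" where
  "ffun A u d l = vvec u l \<bullet> (diagv d *v vvec u l) - tvec A u d l \<bullet> (diagv d *v tvec A u d l)"

definition gammaf :: "real^'m^'n \<Rightarrow> real^'m \<Rightarrow> real^'m \<Rightarrow> real^'m \<Rightarrow> 'm \<Rightarrow> real" where
  "gammaf A u d l i = sqrt (ffun A u d l * (column i A \<bullet> (matrix_inv (Bmat A d) *v column i A)))"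

text \<open>z* = max_x min_i (u_i - a_i . x); written as a supremum (it is attained under the
  standing assumptions).\<close>
definition zstar :: "real^'m^'n \<Rightarrow> real^'m \<Rightarrow> real" where
  "zstar A u = (SUP x. Min (range (\<lambda>i. u $ i - column i A \<bullet> x)))"

definition tau :: "real^'m^'n \<Rightarrow> real^'m \<Rightarrow> real" where
  "tau A u = \<bar>zstar A u\<bar>"

definition phi :: "real^'m^'n \<Rightarrow> real^'m \<Rightarrow> real^'m \<Rightarrow> real^'m \<Rightarrow> real" where
  "phi A u d l = (\<Prod>i\<in>UNIV.
     max ((d $ i / ffun A u d l) powr (-1/2))
         (real CARD('m) / (real CARD('m) + 1) * tau A u))"

end

theory Submission
  imports Defs
begin

text \<open>Write \<open>x\<^sub>i = d\<^sub>i / f(d,\<ell>)\<close>, so that the i-th factor of \<open>\<phi>\<close> is \<open>max (1/\<surd>x\<^sub>i) \<kappa>\<close> with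
  \<open>\<kappa> = m/(m+1) \<tau>\<close>. The update multiplies every \<open>x\<^sub>i\<close> by \<open>\<alpha> \<ge> (m\<^sup>2-1)/m\<^sup>2\<close> and in addition raises
  \<open>x\<^sub>j\<close> by \<open>2/((m-1)\<gamma>\<^sub>j\<^sup>2) \<ge> 2x\<^sub>j/(m-1)\<close>; the latter holds because the leverage score
  \<open>d\<^sub>j a\<^sub>j\<^sup>T B(d)\<inverse> a\<^sub>j\<close> is at most 1. Hence the j-th factor shrinks by \<open>m/(m+1)\<close> (here
  \<open>1/\<surd>x\<^sub>j \<ge> \<tau>\<close> makes the first argument of the max dominant), while each of the other
  \<open>m-1\<close> factors grows by at most \<open>\<surd>(m\<^sup>2/(m\<^sup>2-1))\<close>. Both bounds are estimated by \<open>1 + y \<le> e\<^sup>y\<close>.\<close>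

lemma diagv_mult_vec_nth: "(diagv d *v v) $ i = d $ i * v $ i"
proof -
  have "(\<Sum>k\<in>UNIV. (if i = k then d $ i else 0) * v $ k) = (\<Sum>k\<in>UNIV. if i = k then d $ i * v $ k else 0)"
    by (rule sum.cong) auto
  then show ?thesis by (simp add: diagv_def matrix_vector_mult_def)
qed

lemma vector_matrix_mult_nth: "(w v* A) $ i = column i A \<bullet> (w::real^'n)"
  by (simp add: column_def vector_matrix_mult_def inner_vec_def mult.commute)

lemma inner_Bmat_eq_sum:
  fixes A :: "real^'m^'n"
  shows "w \<bullet> (Bmat A d *v w) = (\<Sum>i\<in>UNIV. d $ i * (column i A \<bullet> w)\<^sup>2)"
proof -
  have "w \<bullet> (Bmat A d *v w) = (transpose A *v w) \<bullet> (diagv d *v (transpose A *v w))"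
    unfolding Bmat_def
    by (metis matrix_vector_mul_assoc dot_lmul_matrix transpose_matrix_vector)
  then show ?thesis
    by (simp add: inner_vec_def diagv_mult_vec_nth vector_matrix_mult_nth power2_eq_square ac_simps)
qed

lemma positive_span_columns_orthogonal_imp_zero:
  fixes A :: "real^'m^'n"
  assumes "{A *v c | c. \<forall>i. 0 \<le> c $ i} = UNIV"
    and "\<forall>i. column i A \<bullet> w = 0"
  shows "w = 0"
proof -
  obtain c where c: "w = A *v c"
    using assms(1) by blast
  have "transpose A *v w = 0"
    using assms(2) by (simp add: vec_eq_iff vector_matrix_mult_nth)
  then have "w \<bullet> w = 0"
    by (metis c dot_lmul_matrix transpose_matrix_vector inner_zero_left)
  then show ?thesis by simp
qed

lemma inner_Bmat_pos:
  fixes A :: "real^'m^'n"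
  assumes "{A *v c | c. \<forall>i. 0 \<le> c $ i} = UNIV"
    and d_pos: "\<forall>i. 0 < d $ i" and "w \<noteq> 0"
  shows "0 < w \<bullet> (Bmat A d *v w)"
proof -
  obtain i where i: "column i A \<bullet> w \<noteq> 0"
    using positive_span_columns_orthogonal_imp_zero assms(1,3) by blast
  have "0 < d $ i * (column i A \<bullet> w)\<^sup>2"
    using i d_pos by simp
  also have "\<dots> \<le> (\<Sum>k\<in>UNIV. d $ k * (column k A \<bullet> w)\<^sup>2)"
    using d_pos by (intro member_le_sum) (auto simp: less_imp_le)
  finally show ?thesis by (simp add: inner_Bmat_eq_sum)
qed

lemma invertible_mult_matrix_inv_vec:
  fixes M :: "real^'n^'n"
  assumes "invertible M"
  shows "M *v (matrix_inv M *v a) = a"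
proof -
  have "M ** matrix_inv M = mat 1"
    using assms unfolding matrix_inv_def invertible_def by (rule someI_ex[THEN conjunct1])
  then show ?thesis by (metis matrix_vector_mul_assoc matrix_vector_mul_lid)
qed

lemma Bmat_invertible:
  fixes A :: "real^'m^'n"
  assumes "{A *v c | c. \<forall>i. 0 \<le> c $ i} = UNIV" and "\<forall>i. 0 < d $ i"
  shows "invertible (Bmat A d)"
proof -
  have "\<forall>x. Bmat A d *v x = 0 \<longrightarrow> x = 0"
    using inner_Bmat_pos[OF assms] by (metis inner_zero_right less_irrefl)
  then show ?thesis
    using matrix_left_invertible_ker invertible_left_inverse by blast
qed

text \<open>The leverage score \<open>d\<^sub>j a\<^sub>j\<^sup>T B(d)\<inverse> a\<^sub>j\<close> is at most 1: with \<open>w = B(d)\<inverse> a\<^sub>j\<close> and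
  \<open>q = a\<^sub>j\<^sup>T w = w\<^sup>T B(d) w\<close>, the j-th summand of \<open>w\<^sup>T B(d) w\<close> alone is \<open>d\<^sub>j q\<^sup>2\<close>.\<close>

lemma leverage_score_le_one:
  fixes A :: "real^'m^'n"
  assumes pos_span: "{A *v c | c. \<forall>i. 0 \<le> c $ i} = UNIV"
    and d_pos: "\<forall>i. 0 < d $ i" and "column j A \<noteq> 0"
  defines "q \<equiv> column j A \<bullet> (matrix_inv (Bmat A d) *v column j A)"
  shows "0 < q" and "d $ j * q \<le> 1"
proof -
  define w where "w = matrix_inv (Bmat A d) *v column j A"
  have Bw: "Bmat A d *v w = column j A"
    unfolding w_def by (rule invertible_mult_matrix_inv_vec[OF Bmat_invertible[OF pos_span d_pos]])
  have q_quad: "q = w \<bullet> (Bmat A d *v w)"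
    unfolding q_def w_def[symmetric] Bw by (simp add: inner_commute)
  have "w \<noteq> 0"
    using Bw assms(3) by auto
  then show q_pos: "0 < q"
    unfolding q_quad by (rule inner_Bmat_pos[OF pos_span d_pos])
  have "d $ j * q\<^sup>2 \<le> (\<Sum>i\<in>UNIV. d $ i * (column i A \<bullet> w)\<^sup>2)"
    unfolding q_def w_def[symmetric]
    using d_pos by (intro member_le_sum) (auto simp: less_imp_le)
  also have "\<dots> = q"
    by (simp add: q_quad inner_Bmat_eq_sum)
  finally show "d $ j * q \<le> 1"
    using q_pos by (simp add: power2_eq_square mult_le_cancel_right1 mult.assoc)
qed

lemma scaled_weight_le_inverse_gammaf_sq:
  fixes A :: "real^'m^'n"
  assumes "{A *v c | c. \<forall>i. 0 \<le> c $ i} = UNIV"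
    and "\<forall>i. 0 < d $ i" and "column j A \<noteq> 0" and f_pos: "0 < ffun A u d l"
  shows "d $ j / ffun A u d l \<le> 1 / (gammaf A u d l j)\<^sup>2"
proof -
  define q where "q = column j A \<bullet> (matrix_inv (Bmat A d) *v column j A)"
  have "0 < q" "d $ j * q \<le> 1"
    using leverage_score_le_one[OF assms(1-3)] unfolding q_def by auto
  moreover have "(gammaf A u d l j)\<^sup>2 = ffun A u d l * q"
    unfolding gammaf_def q_def[symmetric] using f_pos \<open>0 < q\<close> by simp
  ultimately show ?thesis
    using f_pos by (simp add: field_simps)
qed

lemma card_ge_2_if_positive_span:
  fixes A :: "real^'m^'n"
  assumes "{A *v c | c. \<forall>i. 0 \<le> c $ i} = UNIV"
  shows "2 \<le> CARD('m)"
proof (rule ccontr)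
  assume "\<not> 2 \<le> CARD('m)"
  moreover have "0 < CARD('m)" by simp
  ultimately have "CARD('m) = 1" by linarith
  then obtain j :: 'm where UNIV_eq: "UNIV = {j}"
    by (rule card_1_singletonE)
  have cone: "\<exists>s \<ge> 0. v = s *s column j A" for v :: "real^'n"
  proof -
    obtain c where "v = A *v c" "0 \<le> c $ j"
      using assms by blast
    then show ?thesis by (auto simp: matrix_mult_sum UNIV_eq)
  qed
  define v :: "real^'n" where "v = axis undefined 1"
  obtain s t where st: "s \<ge> 0" "t \<ge> 0" "v = s *s column j A" "- v = t *s column j A"
    using cone by meson
  have "(s + t) *s column j A = 0"
    by (metis st(3,4) vector_sadd_rdistrib add.right_inverse)
  then have "s + t = 0 \<or> column j A = 0"
    by (simp only: vector_mul_eq_0)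
  then have "s = 0 \<or> column j A = 0"
    using st(1,2) by auto
  moreover have "v \<noteq> 0" by (simp add: v_def)
  ultimately show False
    using st(3) by auto
qed

lemma powr_neg_half: "0 < (y::real) \<Longrightarrow> y powr - (1 / 2) = 1 / sqrt y"
  by (simp add: powr_minus_divide powr_half_sqrt)

lemma phi_eq_prod_inverse_sqrt:
  fixes A :: "real^'m^'n"
  assumes "\<forall>i. 0 < d $ i" and "0 < ffun A u d l"
  shows "phi A u d l = (\<Prod>i\<in>UNIV. max (1 / sqrt (d $ i / ffun A u d l))
                                      (real CARD('m) / (real CARD('m) + 1) * tau A u))"
  unfolding phi_def using assms by (intro prod.cong) (simp_all add: powr_neg_half)

lemma phi_nonneg: "0 \<le> phi A u d l"
  unfolding phi_def by (intro prod_nonneg) (simp add: le_max_iff_disj)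

lemma max_inverse_sqrt_le_scaled:
  fixes x x' s \<kappa> :: real
  assumes "0 < x" "0 < s" "x \<le> s\<^sup>2 * x'" and "\<kappa> \<le> s * max (1 / sqrt x) \<kappa>"
  shows "max (1 / sqrt x') \<kappa> \<le> s * max (1 / sqrt x) \<kappa>"
proof -
  have "sqrt x \<le> s * sqrt x'"
    using real_sqrt_le_mono[OF assms(3)] assms(2) by (simp add: real_sqrt_mult)
  moreover have "0 < x'"
  proof -
    have "0 < s\<^sup>2 * x'" using assms(1,3) by linarith
    then show ?thesis using assms(2) by (simp add: zero_less_mult_iff)
  qed
  ultimately have "1 / sqrt x' \<le> s * (1 / sqrt x)"
    using assms(1,2) by (simp add: field_simps)
  also have "\<dots> \<le> s * max (1 / sqrt x) \<kappa>"
    using assms(2) by (intro mult_left_mono) auto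
  finally show ?thesis using assms(4) by simp
qed

lemma phi_le_prod_mult_phi:
  fixes A :: "real^'m^'n" and u :: "real^'m" and g :: "'m \<Rightarrow> real"
  defines "\<kappa> \<equiv> real CARD('m) / (real CARD('m) + 1) * tau A u"
  assumes d_pos: "\<forall>i. 0 < d $ i" and d'_pos: "\<forall>i. 0 < d' $ i"
    and f_pos: "0 < ffun A u d l" and f'_pos: "0 < ffun A u d' l'"
    and g_pos: "\<forall>i. 0 < g i"
    and weight: "\<forall>i. d $ i / ffun A u d l \<le> (g i)\<^sup>2 * (d' $ i / ffun A u d' l')"
    and kappa_le: "\<forall>i. \<kappa> \<le> g i * max (1 / sqrt (d $ i / ffun A u d l)) \<kappa>"
  shows "phi A u d' l' \<le> (\<Prod>i\<in>UNIV. g i) * phi A u d l"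
proof -
  have "phi A u d' l' \<le> (\<Prod>i\<in>UNIV. g i * max (1 / sqrt (d $ i / ffun A u d l)) \<kappa>)"
    unfolding phi_eq_prod_inverse_sqrt[OF d'_pos f'_pos] \<kappa>_def[symmetric]
  proof (rule prod_mono)
    fix i
    have "0 < d $ i / ffun A u d l" "0 < d' $ i / ffun A u d' l'"
      using d_pos d'_pos f_pos f'_pos by simp_all
    then show "0 \<le> max (1 / sqrt (d' $ i / ffun A u d' l')) \<kappa> \<and>
        max (1 / sqrt (d' $ i / ffun A u d' l')) \<kappa>
          \<le> g i * max (1 / sqrt (d $ i / ffun A u d l)) \<kappa>"
      using max_inverse_sqrt_le_scaled[OF _ g_pos[rule_format] weight[rule_format] kappa_le[rule_format]]
      by (simp add: le_max_iff_disj)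
  qed
  then show ?thesis
    by (simp add: prod.distrib phi_eq_prod_inverse_sqrt[OF d_pos f_pos] \<kappa>_def)
qed

lemma prod_if_eq_UNIV:
  fixes a b :: "'b::comm_monoid_mult" and j :: "'a::finite"
  shows "(\<Prod>i\<in>UNIV. if i = j then a else b) = a * b ^ (CARD('a) - 1)"
proof -
  have "(\<Prod>i\<in>UNIV. if i = j then a else b) = a * (\<Prod>i\<in>UNIV - {j}. if i = j then a else b)"
    by (simp add: prod.remove[of UNIV j])
  also have "(\<Prod>i\<in>UNIV - {j}. if i = j then a else b) = b ^ (CARD('a) - 1)"
    by (simp add: card_Diff_singleton)
  finally show ?thesis .
qed

definition potential_factor :: "real \<Rightarrow> 'm \<Rightarrow> 'm \<Rightarrow> real" where
  "potential_factor m j i = (if i = j then m / (m + 1) else sqrt (m\<^sup>2 / (m\<^sup>2 - 1)))"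

lemma prod_potential_factor:
  "(\<Prod>i\<in>UNIV. potential_factor m j i) = m / (m + 1) * sqrt (m\<^sup>2 / (m\<^sup>2 - 1)) ^ (CARD('m) - 1)"
  for j :: "'m::finite"
  unfolding potential_factor_def by (rule prod_if_eq_UNIV)

lemma scaled_tau_le_potential_factor_mult_max:
  fixes x :: "'m \<Rightarrow> real" and m \<tau> :: real
  assumes "1 < m" and "0 \<le> \<tau>" and "\<tau> \<le> 1 / sqrt (x j)"
  defines "\<kappa> \<equiv> m / (m + 1) * \<tau>"
  shows "\<kappa> \<le> potential_factor m j i * max (1 / sqrt (x i)) \<kappa>"
proof (cases "i = j")
  case True
  have "\<kappa> \<le> m / (m + 1) * (1 / sqrt (x j))"
    unfolding \<kappa>_def using assms(1,3) by (intro mult_left_mono) auto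
  also have "\<dots> \<le> m / (m + 1) * max (1 / sqrt (x j)) \<kappa>"
    using assms(1) by (intro mult_left_mono) auto
  finally show ?thesis
    using True by (simp add: potential_factor_def)
next
  case False
  have p: "1 \<le> sqrt (m\<^sup>2 / (m\<^sup>2 - 1))" and "0 \<le> \<kappa>"
    using assms(1,2) by (simp_all add: \<kappa>_def)
  then have "\<kappa> \<le> sqrt (m\<^sup>2 / (m\<^sup>2 - 1)) * \<kappa>"
    by (simp add: mult_le_cancel_right1)
  also have "\<dots> \<le> sqrt (m\<^sup>2 / (m\<^sup>2 - 1)) * max (1 / sqrt (x i)) \<kappa>"
    using p by (intro mult_left_mono) auto
  finally show ?thesis
    using False by (simp add: potential_factor_def)
qed

lemma scaled_weight_le_of_uniform_scaling:
  fixes m \<alpha> x :: real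
  assumes "1 < m" and "(m\<^sup>2 - 1) / m\<^sup>2 \<le> \<alpha>" and "0 \<le> x"
  shows "x \<le> m\<^sup>2 / (m\<^sup>2 - 1) * (\<alpha> * x)"
proof -
  have "1 < m\<^sup>2" "m \<noteq> 0"
    using assms(1) by (simp_all add: one_less_power)
  then have "m\<^sup>2 / (m\<^sup>2 - 1) * ((m\<^sup>2 - 1) / m\<^sup>2 * x) \<le> m\<^sup>2 / (m\<^sup>2 - 1) * (\<alpha> * x)"
    using assms(2,3) by (intro mult_left_mono mult_right_mono) auto
  with \<open>1 < m\<^sup>2\<close> \<open>m \<noteq> 0\<close> show ?thesis by simp
qed

lemma scaled_weight_le_of_leverage_step:
  fixes m \<alpha> x c :: real
  assumes "1 < m" and "(m\<^sup>2 - 1) / m\<^sup>2 \<le> \<alpha>" and "0 \<le> x" and "2 * x / (m - 1) \<le> c"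
  shows "x \<le> (m / (m + 1))\<^sup>2 * (\<alpha> * (x + c))"
proof -
  have "1 < m\<^sup>2"
    using assms(1) by (simp add: one_less_power)
  then have "0 \<le> \<alpha>"
    using assms(2) order.trans[of 0 "(m\<^sup>2 - 1) / m\<^sup>2" \<alpha>] by simp
  have "0 < m - 1" "0 < m"
    using assms(1) by auto
  then have "(m\<^sup>2 - 1) / m\<^sup>2 * (x + 2 * x / (m - 1)) = ((m + 1) / m)\<^sup>2 * x"
    by (simp add: divide_simps power2_eq_square) (simp add: algebra_simps)
  then have "x = (m / (m + 1))\<^sup>2 * ((m\<^sup>2 - 1) / m\<^sup>2 * (x + 2 * x / (m - 1)))"
    using \<open>0 < m\<close> by (simp add: power_divide)
  also have "\<dots> \<le> (m / (m + 1))\<^sup>2 * (\<alpha> * (x + c))"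
    using assms \<open>0 \<le> \<alpha>\<close> by (intro mult_left_mono mult_mono) auto
  finally show ?thesis .
qed

lemma scaled_weight_le_potential_factor_sq:
  fixes A :: "real^'m^'n"
  defines "m \<equiv> real CARD('m)"
  assumes pos_span: "{A *v c | c. \<forall>i. 0 \<le> c $ i} = UNIV"
    and d_pos: "\<forall>i. 0 < d $ i" and "column j A \<noteq> 0" and f_pos: "0 < ffun A u d l"
    and upd: "(1 / ffun A u d' l') *\<^sub>R d' =
       \<alpha> *\<^sub>R ((1 / ffun A u d l) *\<^sub>R d + (2 / (m - 1) * (1 / (gammaf A u d l j)\<^sup>2)) *\<^sub>R axis j 1)"
    and alpha_ge: "(m\<^sup>2 - 1) / m\<^sup>2 \<le> \<alpha>"
  shows "d $ i / ffun A u d l \<le> (potential_factor m j i)\<^sup>2 * (d' $ i / ffun A u d' l')"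
proof -
  define x where "x i = d $ i / ffun A u d l" for i
  define c where "c = 2 / (m - 1) * (1 / (gammaf A u d l j)\<^sup>2)"
  have m: "1 < m"
    using card_ge_2_if_positive_span[OF pos_span] by (simp add: m_def)
  have x_nonneg: "0 \<le> x i" for i
    using d_pos f_pos by (simp add: x_def less_imp_le)
  have x'_eq: "d' $ i / ffun A u d' l' = \<alpha> * (x i + (if i = j then c else 0))" for i
    using arg_cong[OF upd, of "\<lambda>v. v $ i"] by (auto simp: x_def c_def axis_def)
  have "x j \<le> 1 / (gammaf A u d l j)\<^sup>2"
    unfolding x_def by (rule scaled_weight_le_inverse_gammaf_sq[OF pos_span d_pos assms(4) f_pos])
  then have "2 * x j / (m - 1) \<le> 2 * (1 / (gammaf A u d l j)\<^sup>2) / (m - 1)"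
    using m by (intro divide_right_mono) auto
  then have "2 * x j / (m - 1) \<le> c"
    by (simp add: c_def ac_simps)
  then show ?thesis
    using scaled_weight_le_of_leverage_step[OF m alpha_ge x_nonneg]
      scaled_weight_le_of_uniform_scaling[OF m alpha_ge x_nonneg] m
    by (auto simp: potential_factor_def x'_eq x_def)
qed

lemma sqrt_one_add_le_exp_half: "sqrt (1 + y) \<le> exp (y / 2)"
proof -
  have "1 + y \<le> (exp (y / 2))\<^sup>2"
    using exp_ge_add_one_self[of y] by (simp add: power2_eq_square flip: exp_add)
  then show ?thesis
    using real_sqrt_le_mono by fastforce
qed

lemma prod_potential_factor_le_exp:
  fixes j :: "'m::finite"
  assumes "2 \<le> CARD('m)"
  defines "m \<equiv> real CARD('m)"
  shows "(\<Prod>i\<in>UNIV. potential_factor m j i) \<le> exp (- 1 / (2 * (m + 1)))"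
proof -
  have m2: "2 \<le> m" using assms by (simp add: m_def)
  have "2\<^sup>2 \<le> m\<^sup>2"
    using m2 by (rule power_mono) simp
  then have mm: "0 < m\<^sup>2 - 1" by simp
  have "sqrt (m\<^sup>2 / (m\<^sup>2 - 1)) = sqrt (1 + 1 / (m\<^sup>2 - 1))"
    using mm by (simp add: field_simps)
  also have "\<dots> \<le> exp (1 / (m\<^sup>2 - 1) / 2)"
    by (rule sqrt_one_add_le_exp_half)
  finally have "sqrt (m\<^sup>2 / (m\<^sup>2 - 1)) ^ (CARD('m) - 1) \<le> exp (1 / (m\<^sup>2 - 1) / 2) ^ (CARD('m) - 1)"
    by (rule power_mono) (use mm in simp)
  also have "\<dots> = exp (1 / (2 * (m + 1)))"
    using assms mm by (simp add: m_def of_nat_diff field_simps power2_eq_square flip: exp_of_nat_mult)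
  finally have grow: "sqrt (m\<^sup>2 / (m\<^sup>2 - 1)) ^ (CARD('m) - 1) \<le> exp (1 / (2 * (m + 1)))" .
  have shrink: "m / (m + 1) \<le> exp (- 1 / (m + 1))"
    using exp_ge_add_one_self[of "- 1 / (m + 1)"] m2 by (simp add: field_simps)
  have "(\<Prod>i\<in>UNIV. potential_factor m j i) \<le> exp (- 1 / (m + 1)) * exp (1 / (2 * (m + 1)))"
    unfolding prod_potential_factor by (rule mult_mono[OF shrink grow]) (use mm in auto)
  also have "\<dots> = exp (- 1 / (2 * (m + 1)))"
    using m2 by (simp flip: exp_add) (simp add: field_simps)
  finally show ?thesis .
qed

theorem lemma9:
  fixes A :: "real^'m^'n" and u d d' l l' :: "real^'m" and j :: 'm and \<alpha> :: real
  assumes unit_cols: "\<forall>i. norm (column i A) = 1"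
    and pos_span: "{A *v c | c. \<forall>i. 0 \<le> c $ i} = UNIV"
    and d_pos: "\<forall>i. 0 < d $ i"
    and d'_pos: "\<forall>i. 0 < d' $ i"
    and f_pos: "0 < ffun A u d l"
    and f'_pos: "0 < ffun A u d' l'"
    and upd: "(1 / ffun A u d' l') *\<^sub>R d' =
       \<alpha> *\<^sub>R ((1 / ffun A u d l) *\<^sub>R d
          + (2 / (real CARD('m) - 1) * (1 / (gammaf A u d l j)\<^sup>2)) *\<^sub>R axis j 1)"
    and alpha_ge: "\<alpha> \<ge> ((real CARD('m))\<^sup>2 - 1) / (real CARD('m))\<^sup>2"
    and big: "(d $ j / ffun A u d l) powr (-1/2) \<ge> tau A u"
  shows "phi A u d' l' \<le> exp (- 1 / (2 * (real CARD('m) + 1))) * phi A u d l"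
proof -
  define m where "m = real CARD('m)"
  have card: "2 \<le> CARD('m)"
    by (rule card_ge_2_if_positive_span[OF pos_span])
  have "column j A \<noteq> 0"
    using unit_cols by (metis norm_zero zero_neq_one)
  then have weight: "d $ i / ffun A u d l \<le> (potential_factor m j i)\<^sup>2 * (d' $ i / ffun A u d' l')" for i
    using scaled_weight_le_potential_factor_sq[OF pos_span d_pos _ f_pos] upd alpha_ge
    by (simp add: m_def)
  have "tau A u \<le> 1 / sqrt (d $ j / ffun A u d l)"
    using big d_pos f_pos by (simp add: powr_neg_half)
  then have tau_bound: "m / (m + 1) * tau A u
      \<le> potential_factor m j i * max (1 / sqrt (d $ i / ffun A u d l)) (m / (m + 1) * tau A u)" for i
    using card by (intro scaled_tau_le_potential_factor_mult_max) (auto simp: m_def tau_def)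
  have "phi A u d' l' \<le> (\<Prod>i\<in>UNIV. potential_factor m j i) * phi A u d l"
    using weight tau_bound card d_pos d'_pos f_pos f'_pos
    by (intro phi_le_prod_mult_phi) (auto simp: m_def potential_factor_def)
  also have "\<dots> \<le> exp (- 1 / (2 * (m + 1))) * phi A u d l"
    using prod_potential_factor_le_exp[OF card] phi_nonneg
    by (intro mult_right_mono) (simp_all add: m_def)
  finally show ?thesis by (simp add: m_def)
qed

end
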